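(* For any single-qubit non-stabilizer state $\rho$ there exists an $\omega$-witness $|\omega\rangle$ such that $\rho\in B_\omega$, where $B_\omega$ is the convex hull of all pure single-qubit states $\Psi$ with $|\langle\omega|\Psi\rangle|^2=\xi(\Psi)$.
   Context: Single-qubit pure stabilizer states are $|0\rangle,|1\rangle,|\pm\rangle,|\pm_i\rangle$; a non-stabilizer state is one not in their convex hull. An $\omega$-witness is a vector $|\omega\rangle\in\mathbb C^2$ with $|\langle\omega|\phi\rangle|\le1$ for all pure single-qubit stabilizer states $|\phi\rangle$. The stabilizer extent is $\xi(\Psi)=\min\{\|c\|_1^2:|\Psi\rangle=\sum_jc_j|\phi_j\rangle,\ |\phi_j\rangle\text{ stabilizer}\}$. *)

theory Defs
  imports "HOL-Analysis.Analysis"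
begin

definition ket :: "complex \<Rightarrow> complex \<Rightarrow> complex ^ 2" where
  "ket a b = (\<chi> i. if i = 1 then a else b)"

definition braket :: "complex ^ 2 \<Rightarrow> complex ^ 2 \<Rightarrow> complex" where
  "braket w v = (\<Sum>i\<in>UNIV. cnj (w $ i) * v $ i)"

definition stab_states :: "(complex ^ 2) set" where
  "stab_states =
    {ket 1 0, ket 0 1,
     ket (1 / sqrt 2) (1 / sqrt 2), ket (1 / sqrt 2) (- 1 / sqrt 2),
     ket (1 / sqrt 2) (\<i> / sqrt 2), ket (1 / sqrt 2) (- \<i> / sqrt 2)}"

definition proj :: "complex ^ 2 \<Rightarrow> complex ^ 2 ^ 2" where
  "proj v = (\<chi> i j. v $ i * cnj (v $ j))"

definition density_matrix :: "complex ^ 2 ^ 2 \<Rightarrow> bool" where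
  "density_matrix \<rho> \<longleftrightarrow>
     (\<forall>i j. \<rho> $ i $ j = cnj (\<rho> $ j $ i)) \<and>
     (\<forall>v. Re (braket v (\<rho> *v v)) \<ge> 0) \<and>
     \<rho> $ 1 $ 1 + \<rho> $ 2 $ 2 = 1"

definition non_stabilizer :: "complex ^ 2 ^ 2 \<Rightarrow> bool" where
  "non_stabilizer \<rho> \<longleftrightarrow> \<rho> \<notin> convex hull (proj ` stab_states)"

definition omega_witness :: "complex ^ 2 \<Rightarrow> bool" where
  "omega_witness w \<longleftrightarrow> (\<forall>\<phi>\<in>stab_states. cmod (braket w \<phi>) \<le> 1)"

text \<open>Stabilizer extent: minimum of the squared l1-norm over all finite decompositions
  into stabilizer states (the minimum is rendered as an infimum).\<close>
definition stab_extent :: "complex ^ 2 \<Rightarrow> real" where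
  "stab_extent \<Psi> = Inf {(\<Sum>j<n. cmod (c j))\<^sup>2 | (n::nat) (c::nat \<Rightarrow> complex) (\<phi>::nat \<Rightarrow> complex ^ 2).
       (\<forall>j<n. \<phi> j \<in> stab_states) \<and> \<Psi> = (\<Sum>j<n. c j *s \<phi> j)}"

definition B_omega :: "complex ^ 2 \<Rightarrow> (complex ^ 2 ^ 2) set" where
  "B_omega w = convex hull
     {proj \<Psi> | \<Psi>. norm \<Psi> = 1 \<and> (cmod (braket w \<Psi>))\<^sup>2 = stab_extent \<Psi>}"

end

theory Submission
  imports Defs
begin

text \<open>Write \<open>\<rho> = (I + x X + y Y + z Z) / 2\<close>; the non-stabilizer condition means
  \<open>|x| + |y| + |z| > 1\<close>. Fix a witness \<open>w\<close> and let its cone be the nonnegative combinations of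
  phased stabilizer states \<open>g\<close> with \<open>\<langle>w|g\<rangle> = 1\<close>. Every vector \<open>v\<close> of this cone attains the
  bound \<open>|\<langle>w|v\<rangle>|\<^sup>2 \<le> \<xi>(v)\<close> with equality, since the defining combination is an \<open>l\<^sub>1\<close>-decomposition of
  norm \<open>\<langle>w|v\<rangle>\<close>. Hence it suffices to write \<open>(1, x, y, z)\<close> as a nonnegative combination of
  (unnormalised) Bloch vectors of cone vectors of a single witness.

  The sign changes and the cyclic permutation of the Bloch axes are induced by (anti)unitaries
  permuting the stabilizer states up to phase, so we may assume \<open>x, y, z \<ge> 0\<close>. There one moves
  from \<open>(1, x, y, z)\<close> towards the light cone along Bloch vectors of the witness cone of a "face"
  witness whose cone is spanned by phased \<open>|+\<rangle>\<close>, \<open>|+i\<rangle>\<close> and \<open>|0\<rangle>\<close>; the light-cone point is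
  itself the Bloch vector of a cone vector as long as certain explicit weights stay nonnegative.
  When a weight is negative the point lies near an edge of the octahedron, and a witness whose
  cone is spanned by \<open>|0\<rangle>\<close> and a phase-rotated \<open>|+\<rangle>\<close> gives a two-term decomposition.\<close>

lemma cmod_mult_self: "cmod a * cmod a = Re a * Re a + Im a * Im a"
  by (metis cmod_power2 power2_eq_square)

lemma cmod_le_1_iff_sum_squares: "cmod z \<le> 1 \<longleftrightarrow> Re z * Re z + Im z * Im z \<le> 1"
  by (simp add: cmod_def power2_eq_square)

lemma sqrt_2_mult_sqrt_2:
  "sqrt 2 * (sqrt 2 * x) = 2 * x"
  "complex_of_real (sqrt 2) * complex_of_real (sqrt 2) = 2"
  "complex_of_real (sqrt 2) * (complex_of_real (sqrt 2) * z) = 2 * z"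
  by (simp_all add: mult.assoc[symmetric] flip: of_real_mult)

lemma sqrt_3_bounds: "1.7 < sqrt 3" "sqrt 3 < 1.8"
proof -
  show "1.7 < sqrt 3"
    by (rule real_less_rsqrt) (simp add: power2_eq_square)
  have "sqrt 3 < sqrt ((1.8::real)\<^sup>2)"
    by (simp only: real_sqrt_less_iff) (simp add: power2_eq_square)
  then show "sqrt 3 < 1.8"
    by simp
qed

lemma sqrt_3_mult_sqrt_3: "sqrt 3 * (sqrt 3 * x) = 3 * x"
  by (simp add: mult.assoc[symmetric])

lemma braket_scaleR: "braket w (r *\<^sub>R v) = of_real r * braket w v"
  unfolding braket_def sum_2 vector_scaleR_component by (simp add: scaleR_conv_of_real algebra_simps)

lemma braket_smult: "braket w (c *s v) = c * braket w v"
  by (simp add: braket_def sum_2 algebra_simps)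

lemma braket_sum: "braket w (\<Sum>j\<in>S. f j) = (\<Sum>j\<in>S. braket w (f j))"
  unfolding braket_def sum_component sum_distrib_left by (rule sum.swap)

lemma scaleR_vector_smult: "r *\<^sub>R (c *s v) = (of_real r * c) *s (v :: complex ^ 'n)"
  unfolding vec_eq_iff vector_scaleR_component vector_smult_component by (simp add: scaleR_conv_of_real)

section \<open>Witness cones attain the stabilizer extent\<close>

definition phased_stab_states :: "(complex ^ 2) set" where
  "phased_stab_states = {c *s \<phi> | c \<phi>. cmod c = 1 \<and> \<phi> \<in> stab_states}"

definition witness_generators :: "complex ^ 2 \<Rightarrow> (complex ^ 2) set" where
  "witness_generators w = {g \<in> phased_stab_states. braket w g = 1}"

definition witness_cone :: "complex ^ 2 \<Rightarrow> (complex ^ 2) set" where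
  "witness_cone w = convex_cone hull witness_generators w"

lemma stab_states_subset_phased: "stab_states \<subseteq> phased_stab_states"
  unfolding phased_stab_states_def by (force intro: exI[of _ 1])

lemma phased_stab_states_smult:
  assumes "cmod c = 1" "g \<in> phased_stab_states"
  shows "c *s g \<in> phased_stab_states"
proof -
  obtain d \<phi> where "cmod d = 1" "\<phi> \<in> stab_states" "g = d *s \<phi>"
    using assms(2) unfolding phased_stab_states_def by blast
  then show ?thesis
    using assms(1) unfolding phased_stab_states_def
    by (auto simp: vector_smult_assoc norm_mult intro!: exI[of _ "c * d"])
qed

lemma omega_witness_phased:
  "omega_witness w \<Longrightarrow> g \<in> phased_stab_states \<Longrightarrow> cmod (braket w g) \<le> 1"
  unfolding omega_witness_def phased_stab_states_def by (auto simp: braket_smult norm_mult)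

lemma stab_extent_ge_witness:
  assumes "omega_witness w"
  shows "(cmod (braket w \<Psi>))\<^sup>2 \<le> stab_extent \<Psi>"
proof -
  define D where "D = {(\<Sum>j<n. cmod (c j))\<^sup>2 | (n::nat) (c::nat \<Rightarrow> complex) (\<phi>::nat \<Rightarrow> complex ^ 2).
       (\<forall>j<n. \<phi> j \<in> stab_states) \<and> \<Psi> = (\<Sum>j<n. c j *s \<phi> j)}"
  have "(\<Sum>j<2. cmod ([\<Psi> $ 1, \<Psi> $ 2] ! j))\<^sup>2 \<in> D"
    unfolding D_def
  proof (intro CollectI exI conjI)
    show "\<forall>j<2. [ket 1 0, ket 0 1] ! j \<in> stab_states"
      by (auto simp: stab_states_def less_2_cases_iff)
    show "\<Psi> = (\<Sum>j<2. [\<Psi> $ 1, \<Psi> $ 2] ! j *s [ket 1 0, ket 0 1] ! j)"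
      by (simp add: eval_nat_numeral vec_eq_iff forall_2 ket_def)
  qed (rule refl)
  then have "D \<noteq> {}" by blast
  moreover have "(cmod (braket w \<Psi>))\<^sup>2 \<le> d" if "d \<in> D" for d
  proof -
    obtain n :: nat and c \<phi> where d: "d = (\<Sum>j<n. cmod (c j))\<^sup>2"
      and \<phi>: "\<forall>j<n. \<phi> j \<in> stab_states" and \<Psi>: "\<Psi> = (\<Sum>j<n. c j *s \<phi> j)"
      using \<open>d \<in> D\<close> unfolding D_def by blast
    have "cmod (braket w \<Psi>) \<le> (\<Sum>j<n. cmod (c j * braket w (\<phi> j)))"
      unfolding \<Psi> braket_sum braket_smult by (rule norm_sum)
    also have "\<dots> \<le> (\<Sum>j<n. cmod (c j))"
      using \<phi> assms unfolding omega_witness_def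
      by (intro sum_mono) (simp add: norm_mult mult_left_le)
    finally show ?thesis
      unfolding d by (simp add: power_mono)
  qed
  ultimately show ?thesis
    unfolding stab_extent_def D_def[symmetric] by (rule cInf_greatest)
qed

lemma stab_extent_le_sum:
  assumes "finite S" "\<And>j. j \<in> S \<Longrightarrow> \<phi> j \<in> stab_states" "\<Psi> = (\<Sum>j\<in>S. c j *s \<phi> j)"
  shows "stab_extent \<Psi> \<le> (\<Sum>j\<in>S. cmod (c j))\<^sup>2"
proof -
  obtain h where h: "bij_betw h {..<card S} S"
    using ex_bij_betw_nat_finite[OF assms(1)] by (auto simp: lessThan_atLeast0)
  have reindex: "(\<Sum>j\<in>S. f j) = (\<Sum>i<card S. f (h i))" for f :: "_ \<Rightarrow> 'b::comm_monoid_add"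
    by (rule sum.reindex_bij_betw[OF h, symmetric])
  show ?thesis
    unfolding stab_extent_def reindex
  proof (rule cInf_lower)
    show "(\<Sum>i<card S. cmod (c (h i)))\<^sup>2 \<in> {(\<Sum>j<n. cmod (c j))\<^sup>2 | (n::nat) (c::nat \<Rightarrow> complex) (\<phi>::nat \<Rightarrow> complex ^ 2).
       (\<forall>j<n. \<phi> j \<in> stab_states) \<and> \<Psi> = (\<Sum>j<n. c j *s \<phi> j)}"
      using assms(2,3) bij_betwE[OF h] unfolding reindex
      by (intro CollectI exI[of _ "card S"] exI[of _ "c \<circ> h"] exI[of _ "\<phi> \<circ> h"]) auto
  qed (auto intro: bdd_belowI[of _ 0] simp del: sum_power2)
qed

lemma witness_cone_nonneg_combination:
  assumes "v \<in> witness_cone w"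
  obtains S a where "finite S" "S \<subseteq> witness_generators w" "\<And>g. g \<in> S \<Longrightarrow> 0 \<le> a g"
    "v = (\<Sum>g\<in>S. a g *\<^sub>R g)"
proof -
  consider "v = 0" | c u where "0 \<le> c" "u \<in> convex hull witness_generators w" "v = c *\<^sub>R u"
    using assms unfolding witness_cone_def convex_cone_hull_convex_hull by blast
  then show thesis
  proof cases
    case 1
    then show thesis by (intro that[of "{}"]) auto
  next
    case 2
    then obtain S a where "finite S" "S \<subseteq> witness_generators w" "\<And>g. g \<in> S \<Longrightarrow> 0 \<le> a g"
      "u = (\<Sum>g\<in>S. a g *\<^sub>R g)"
      unfolding convex_hull_explicit by blast
    with 2 show thesis
      by (intro that[of S "\<lambda>g. c * a g"]) (auto simp: scaleR_sum_right)
  qed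
qed

lemma stab_extent_witness_cone:
  assumes "omega_witness w" "v \<in> witness_cone w"
  shows "stab_extent v = (cmod (braket w v))\<^sup>2"
proof (rule antisym)
  obtain S a where S: "finite S" "S \<subseteq> witness_generators w" and a: "\<And>g. g \<in> S \<Longrightarrow> 0 \<le> a g"
    and v: "v = (\<Sum>g\<in>S. a g *\<^sub>R g)"
    using witness_cone_nonneg_combination[OF assms(2)] by blast
  have "\<forall>g\<in>S. \<exists>c \<phi>. cmod c = 1 \<and> \<phi> \<in> stab_states \<and> g = c *s \<phi>"
    using S(2) unfolding witness_generators_def phased_stab_states_def by blast
  then obtain c \<phi> where c: "\<And>g. g \<in> S \<Longrightarrow> cmod (c g) = 1"
    and \<phi>: "\<And>g. g \<in> S \<Longrightarrow> \<phi> g \<in> stab_states" and g: "\<And>g. g \<in> S \<Longrightarrow> g = c g *s \<phi> g"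
    by metis
  have "v = (\<Sum>g\<in>S. (of_real (a g) * c g) *s \<phi> g)"
    unfolding v by (intro sum.cong refl) (metis g scaleR_vector_smult)
  then have "stab_extent v \<le> (\<Sum>g\<in>S. cmod (of_real (a g) * c g))\<^sup>2"
    using S(1) \<phi> by (rule stab_extent_le_sum[rotated 2])
  also have "(\<Sum>g\<in>S. cmod (of_real (a g) * c g)) = (\<Sum>g\<in>S. a g)"
    using a c by (intro sum.cong) (auto simp: norm_mult)
  also have "(\<Sum>g\<in>S. a g) = cmod (braket w v)"
  proof -
    have "braket w v = (\<Sum>g\<in>S. of_real (a g))"
      using S(2) unfolding v braket_sum braket_scaleR witness_generators_def
      by (intro sum.cong) auto
    then show ?thesis
      using a by (simp add: sum_nonneg flip: of_real_sum)
  qed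
  finally show "stab_extent v \<le> (cmod (braket w v))\<^sup>2" .
qed (rule stab_extent_ge_witness[OF assms(1)])

section \<open>Bloch coordinates\<close>

text \<open>The unnormalised Bloch vector \<open>(\<langle>v|v\<rangle>, \<langle>v|X|v\<rangle>, \<langle>v|Y|v\<rangle>, \<langle>v|Z|v\<rangle>)\<close>.\<close>
definition bloch :: "complex ^ 2 \<Rightarrow> real \<times> real \<times> real \<times> real" where
  "bloch v = ((cmod (v $ 1))\<^sup>2 + (cmod (v $ 2))\<^sup>2, 2 * Re (cnj (v $ 1) * v $ 2),
              2 * Im (cnj (v $ 1) * v $ 2), (cmod (v $ 1))\<^sup>2 - (cmod (v $ 2))\<^sup>2)"

text \<open>\<open>bloch_matrix (t, x, y, z) = (t I + x X + y Y + z Z) / 2\<close> with the Pauli matrices \<open>X, Y, Z\<close>.\<close>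
fun bloch_matrix :: "real \<times> real \<times> real \<times> real \<Rightarrow> complex ^ 2 ^ 2" where
  "bloch_matrix (t, x, y, z) =
     (\<chi> i j. if i = 1 then (if j = 1 then Complex ((t + z) / 2) 0 else Complex (x / 2) (- y / 2))
            else (if j = 1 then Complex (x / 2) (y / 2) else Complex ((t - z) / 2) 0))"

lemma linear_bloch_matrix: "linear bloch_matrix"
proof (rule linearI)
  fix p q :: "real \<times> real \<times> real \<times> real" and c :: real
  show "bloch_matrix (p + q) = bloch_matrix p + bloch_matrix q"
    by (cases p rule: prod_cases4; cases q rule: prod_cases4)
      (simp add: vec_eq_iff forall_2 complex_eq_iff field_simps)
  show "bloch_matrix (c *\<^sub>R p) = c *\<^sub>R bloch_matrix p"
    by (cases p rule: prod_cases4) (simp add: vec_eq_iff forall_2 complex_eq_iff field_simps)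
qed

lemma proj_eq_bloch_matrix: "proj v = bloch_matrix (bloch v)"
  by (simp add: vec_eq_iff forall_2 proj_def bloch_def complex_eq_iff cmod_mult_self
      field_simps power2_eq_square)

lemma bloch_scaleR: "bloch (r *\<^sub>R v) = r\<^sup>2 *\<^sub>R bloch v"
  unfolding bloch_def vector_scaleR_component
  by (simp add: cmod_mult_self scaleR_conv_of_real power2_eq_square algebra_simps)

lemma fst_bloch: "fst (bloch v) = (norm v)\<^sup>2"
  by (simp add: bloch_def norm_vec_def L2_set_def sum_2)

lemma convex_cone_hull_level_one:
  fixes f :: "'a::real_vector \<Rightarrow> real"
  assumes f: "linear f" and S: "\<And>s. s \<in> S \<Longrightarrow> f s = 1"
    and x: "x \<in> convex_cone hull S" "f x = 1"
  shows "x \<in> convex hull S"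
proof -
  have "x \<noteq> 0"
    using x(2) linear_0[OF f] by auto
  then obtain c y where c: "0 \<le> c" and y: "y \<in> convex hull S" and xy: "x = c *\<^sub>R y"
    using x(1) unfolding convex_cone_hull_convex_hull by blast
  have "convex hull S \<subseteq> f -` {1}"
    using S by (intro hull_minimal convex_linear_vimage[OF f]) auto
  then have "f y = 1"
    using y by auto
  then have "c = 1"
    using x(2) unfolding xy linear_scale[OF f] by simp
  then show ?thesis
    using xy y by simp
qed

lemma bloch_matrix_in_B_omega:
  assumes w: "omega_witness w" and r: "(1, r) \<in> convex_cone hull (bloch ` witness_cone w)"
  shows "bloch_matrix (1, r) \<in> B_omega w"
proof -
  define Att where "Att = {\<Psi>. norm \<Psi> = 1 \<and> (cmod (braket w \<Psi>))\<^sup>2 = stab_extent \<Psi>}"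
  have "bloch v \<in> convex_cone hull (bloch ` Att)" if v: "v \<in> witness_cone w" for v
  proof (cases "v = 0")
    case True
    have "bloch 0 = 0"
      by (simp add: bloch_def zero_prod_def)
    with True show ?thesis
      by (simp add: convex_cone_hull_contains_0)
  next
    case False
    define \<Psi> where "\<Psi> = (1 / norm v) *\<^sub>R v"
    have "\<Psi> \<in> witness_cone w"
      using v unfolding \<Psi>_def witness_cone_def by (simp add: convex_cone_hull_mul)
    then have "\<Psi> \<in> Att"
      using False stab_extent_witness_cone[OF w] by (simp add: Att_def \<Psi>_def)
    moreover have "bloch v = (norm v)\<^sup>2 *\<^sub>R bloch \<Psi>"
      using False by (simp add: \<Psi>_def bloch_scaleR power_divide)
    ultimately show ?thesis
      by (simp add: convex_cone_hull_mul hull_inc)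
  qed
  then have "convex_cone hull (bloch ` witness_cone w) \<subseteq> convex_cone hull (bloch ` Att)"
    by (intro hull_minimal convex_cone_convex_cone_hull) auto
  then have "(1, r) \<in> convex hull (bloch ` Att)"
    using r by (intro convex_cone_hull_level_one[OF linear_fst]) (auto simp: Att_def fst_bloch)
  then have "bloch_matrix (1, r) \<in> bloch_matrix ` (convex hull (bloch ` Att))"
    by blast
  also have "\<dots> = convex hull (proj ` Att)"
    by (simp add: convex_hull_linear_image[OF linear_bloch_matrix] image_image proj_eq_bloch_matrix)
  also have "\<dots> = B_omega w"
    unfolding B_omega_def Att_def by (simp add: setcompr_eq_image)
  finally show ?thesis .
qed

lemma ket_nth [simp]: "ket a b $ 1 = a" "ket a b $ 2 = b"
  by (simp_all add: ket_def)

lemma density_matrix_eq_bloch_matrix: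
  assumes "density_matrix \<rho>"
  shows "\<rho> = bloch_matrix (1, 2 * Re (\<rho> $ 2 $ 1), 2 * Im (\<rho> $ 2 $ 1), Re (\<rho> $ 1 $ 1) - Re (\<rho> $ 2 $ 2))"
proof -
  have herm: "\<And>i j. \<rho> $ i $ j = cnj (\<rho> $ j $ i)" and tr: "\<rho> $ 1 $ 1 + \<rho> $ 2 $ 2 = 1"
    using assms unfolding density_matrix_def by blast+
  have "Im (\<rho> $ 1 $ 1) = 0" "Im (\<rho> $ 2 $ 2) = 0"
    using arg_cong[OF herm[of 1 1], of Im] arg_cong[OF herm[of 2 2], of Im] by simp_all
  moreover have "Re (\<rho> $ 1 $ 1) + Re (\<rho> $ 2 $ 2) = 1"
    using arg_cong[OF tr, of Re] by simp
  ultimately show ?thesis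
    using herm[of 1 2] by (simp add: vec_eq_iff forall_2 complex_eq_iff)
qed

text \<open>For a pure state (\<open>x\<^sup>2 + y\<^sup>2 + z\<^sup>2 = 1\<close>) both test vectors below span the kernel of the
  Bloch matrix, so positivity on them is exactly the Bloch ball condition.\<close>
lemma density_matrix_bloch_ball:
  assumes "density_matrix (bloch_matrix (1, x, y, z))"
  shows "x\<^sup>2 + y\<^sup>2 + z\<^sup>2 \<le> 1"
proof -
  let ?\<rho> = "bloch_matrix (1, x, y, z)"
  let ?u = "ket (Complex (1 - z) 0) (Complex (- x) (- y))" and ?v = "ket (Complex (- x) y) (Complex (1 + z) 0)"
  have psd: "0 \<le> Re (braket v (?\<rho> *v v))" for v
    using assms unfolding density_matrix_def by blast
  have "Re (braket ?u (?\<rho> *v ?u)) = (1 - z) * (1 - x\<^sup>2 - y\<^sup>2 - z\<^sup>2) / 2"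
    and "Re (braket ?v (?\<rho> *v ?v)) = (1 + z) * (1 - x\<^sup>2 - y\<^sup>2 - z\<^sup>2) / 2"
    by (simp_all add: braket_def matrix_vector_mult_def sum_2 power2_eq_square field_simps)
  then have "0 \<le> (1 - z) * (1 - x\<^sup>2 - y\<^sup>2 - z\<^sup>2)" "0 \<le> (1 + z) * (1 - x\<^sup>2 - y\<^sup>2 - z\<^sup>2)"
    using psd[of ?u] psd[of ?v] by simp_all
  then show ?thesis
    by (cases "z < 1") (auto simp: zero_le_mult_iff)
qed

lemma bloch_stab_states:
  "bloch ` stab_states =
     {(1, 1, 0, 0), (1, -1, 0, 0), (1, 0, 1, 0), (1, 0, -1, 0), (1, 0, 0, 1), (1, 0, 0, -1)}"
  by (simp add: stab_states_def bloch_def norm_divide power_divide insert_commute)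

lemma bloch_matrix_in_stab_hull:
  assumes "\<bar>x\<bar> + \<bar>y\<bar> + \<bar>z\<bar> \<le> 1"
  shows "bloch_matrix (1, x, y, z) \<in> convex hull (proj ` stab_states)"
proof -
  define m where "m = 1 - \<bar>x\<bar> - \<bar>y\<bar> - \<bar>z\<bar>"
  \<comment> \<open>Weight \<open>|x|\<close> on the vertex \<open>(1, sgn x, 0, 0)\<close>, etc.; the slack \<open>m\<close> is spread evenly.\<close>
  define u where "u = (\<lambda>(t::real, a, b, c). max (a * x) 0 + max (b * y) 0 + max (c * z) 0 + m / 6)"
  have fin: "finite (bloch ` stab_states)"
    by (simp add: stab_states_def)
  have "(1, x, y, z) \<in> convex hull (bloch ` stab_states)"
    unfolding convex_hull_finite[OF fin] unfolding bloch_stab_states using assms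
    by (intro CollectI exI[of _ u]) (auto simp: u_def m_def max_def field_simps)
  then have "bloch_matrix (1, x, y, z) \<in> bloch_matrix ` (convex hull (bloch ` stab_states))"
    by blast
  then show ?thesis
    by (simp add: convex_hull_linear_image[OF linear_bloch_matrix] image_image proj_eq_bloch_matrix)
qed

section \<open>Reduction to the positive octant\<close>

definition witness_decomposable :: "real \<times> real \<times> real \<Rightarrow> bool" where
  "witness_decomposable r \<longleftrightarrow>
     (\<exists>w. omega_witness w \<and> (1, r) \<in> convex_cone hull (bloch ` witness_cone w))"

lemma witness_decomposable_symmetry:
  fixes T :: "complex ^ 2 \<Rightarrow> complex ^ 2" and L :: "real \<times> real \<times> real \<times> real \<Rightarrow> real \<times> real \<times> real \<times> real"
  assumes T: "linear T" and L: "linear L"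
    and stab: "T ` phased_stab_states = phased_stab_states"
    and braket: "\<And>w v. braket (T w) (T v) = braket w v \<or> braket (T w) (T v) = cnj (braket w v)"
    and bloch: "\<And>v. bloch (T v) = L (bloch v)"
    and r: "L (1, r) = (1, r')" "witness_decomposable r"
  shows "witness_decomposable r'"
proof -
  obtain w where w: "omega_witness w" and p: "(1, r) \<in> convex_cone hull (bloch ` witness_cone w)"
    using r(2) unfolding witness_decomposable_def by blast
  have cmod_braket: "cmod (braket (T w) (T v)) = cmod (braket w v)" for w v
    using braket[of w v] by auto
  have "omega_witness (T w)"
    unfolding omega_witness_def
  proof
    fix \<phi> assume "\<phi> \<in> stab_states"
    then have "\<phi> \<in> T ` phased_stab_states"
      using stab stab_states_subset_phased by auto
    then obtain g where "g \<in> phased_stab_states" "\<phi> = T g"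
      by blast
    then show "cmod (braket (T w) \<phi>) \<le> 1"
      using omega_witness_phased[OF w] cmod_braket by simp
  qed
  moreover have "T ` witness_generators w \<subseteq> witness_generators (T w)"
  proof
    fix g' assume "g' \<in> T ` witness_generators w"
    then obtain g where g: "g \<in> phased_stab_states" "braket w g = 1" "g' = T g"
      unfolding witness_generators_def by blast
    have "T g \<in> phased_stab_states"
      using imageI[OF g(1), of T] stab by simp
    moreover have "braket (T w) (T g) = 1"
      using braket[of w g] g(2) by auto
    ultimately show "g' \<in> witness_generators (T w)"
      using g(3) unfolding witness_generators_def by blast
  qed
  then have "T ` witness_cone w \<subseteq> witness_cone (T w)"
    unfolding witness_cone_def convex_cone_hull_linear_image[OF T, symmetric] by (rule hull_mono)
  then have "L ` bloch ` witness_cone w \<subseteq> bloch ` witness_cone (T w)"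
    by (metis (no_types, lifting) image_cong image_image image_mono bloch)
  then have "L ` (convex_cone hull (bloch ` witness_cone w)) \<subseteq> convex_cone hull (bloch ` witness_cone (T w))"
    unfolding convex_cone_hull_linear_image[OF L, symmetric] by (rule hull_mono)
  then have "L (1, r) \<in> convex_cone hull (bloch ` witness_cone (T w))"
    using p by blast
  ultimately show ?thesis
    unfolding witness_decomposable_def r(1) by blast
qed


text \<open>No unitary reverses a single Bloch axis, so \<open>flip_x\<close> is antiunitary (\<open>Z\<close> after complex
  conjugation) and only real-linear.\<close>
definition flip_x :: "complex ^ 2 \<Rightarrow> complex ^ 2" where
  "flip_x v = ket (cnj (v $ 1)) (- cnj (v $ 2))"

definition cycle_xyz :: "complex ^ 2 \<Rightarrow> complex ^ 2" where
  "cycle_xyz v = ket ((v $ 1 - \<i> * v $ 2) / sqrt 2) ((v $ 1 + \<i> * v $ 2) / sqrt 2)"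

lemma linear_flip_x: "linear flip_x"
  by (rule linearI; unfold vec_eq_iff forall_2 flip_x_def ket_nth vector_add_component vector_scaleR_component)
    (simp_all add: scaleR_conv_of_real)

lemma linear_cycle_xyz: "linear cycle_xyz"
  by (rule linearI; unfold vec_eq_iff forall_2 cycle_xyz_def ket_nth vector_add_component vector_scaleR_component)
    (simp_all add: scaleR_conv_of_real add_divide_distrib diff_divide_distrib algebra_simps)

lemma flip_x_flip_x: "flip_x (flip_x v) = v"
  by (simp add: flip_x_def vec_eq_iff forall_2)

lemma cycle_xyz_cube: "cycle_xyz (cycle_xyz (cycle_xyz v)) = Complex (1 / sqrt 2) (- 1 / sqrt 2) *s v"
  by (simp add: cycle_xyz_def vec_eq_iff forall_2 complex_eq_iff field_simps sqrt_2_mult_sqrt_2)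

lemma flip_x_smult: "flip_x (c *s v) = cnj c *s flip_x v"
  by (simp add: flip_x_def vec_eq_iff forall_2)

lemma cycle_xyz_smult: "cycle_xyz (c *s v) = c *s cycle_xyz v"
  by (simp add: cycle_xyz_def vec_eq_iff forall_2 algebra_simps add_divide_distrib diff_divide_distrib)

lemma phased_stab_statesI: "cmod c = 1 \<Longrightarrow> \<phi> \<in> stab_states \<Longrightarrow> c *s \<phi> \<in> phased_stab_states"
  unfolding phased_stab_states_def by blast

lemma image_phased_stab_states_subset:
  assumes smult: "\<And>c v. T (c *s v) = c *s T v \<or> T (c *s v) = cnj c *s T v"
    and stab: "\<And>\<phi>. \<phi> \<in> stab_states \<Longrightarrow> T \<phi> \<in> phased_stab_states"
  shows "T ` phased_stab_states \<subseteq> phased_stab_states"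
proof
  fix g assume "g \<in> T ` phased_stab_states"
  then obtain c \<phi> where c: "cmod c = 1" and \<phi>: "\<phi> \<in> stab_states" and g: "g = T (c *s \<phi>)"
    unfolding phased_stab_states_def by blast
  show "g \<in> phased_stab_states"
    using smult[of c \<phi>] phased_stab_states_smult[OF _ stab[OF \<phi>]] c unfolding g by auto
qed

lemma flip_x_stab_kets:
  "flip_x (ket 1 0) = 1 *s ket 1 0"
  "flip_x (ket 0 1) = - 1 *s ket 0 1"
  "flip_x (ket (1 / sqrt 2) (1 / sqrt 2)) = 1 *s ket (1 / sqrt 2) (- 1 / sqrt 2)"
  "flip_x (ket (1 / sqrt 2) (- 1 / sqrt 2)) = 1 *s ket (1 / sqrt 2) (1 / sqrt 2)"
  "flip_x (ket (1 / sqrt 2) (\<i> / sqrt 2)) = 1 *s ket (1 / sqrt 2) (\<i> / sqrt 2)"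
  "flip_x (ket (1 / sqrt 2) (- \<i> / sqrt 2)) = 1 *s ket (1 / sqrt 2) (- \<i> / sqrt 2)"
  by (simp_all add: flip_x_def vec_eq_iff forall_2)

lemma cycle_xyz_stab_kets:
  "cycle_xyz (ket 1 0) = 1 *s ket (1 / sqrt 2) (1 / sqrt 2)"
  "cycle_xyz (ket 0 1) = - \<i> *s ket (1 / sqrt 2) (- 1 / sqrt 2)"
  "cycle_xyz (ket (1 / sqrt 2) (1 / sqrt 2)) = Complex (1 / sqrt 2) (- 1 / sqrt 2) *s ket (1 / sqrt 2) (\<i> / sqrt 2)"
  "cycle_xyz (ket (1 / sqrt 2) (- 1 / sqrt 2)) = Complex (1 / sqrt 2) (1 / sqrt 2) *s ket (1 / sqrt 2) (- \<i> / sqrt 2)"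
  "cycle_xyz (ket (1 / sqrt 2) (\<i> / sqrt 2)) = 1 *s ket 1 0"
  "cycle_xyz (ket (1 / sqrt 2) (- \<i> / sqrt 2)) = 1 *s ket 0 1"
  by (simp_all add: cycle_xyz_def vec_eq_iff forall_2 complex_eq_iff field_simps)

lemma flip_x_stab_state_phased:
  assumes "\<phi> \<in> stab_states"
  shows "flip_x \<phi> \<in> phased_stab_states"
  using assms unfolding stab_states_def
  by (elim insertE emptyE)
    (simp_all only: flip_x_stab_kets, (rule phased_stab_statesI; simp add: stab_states_def)+)

lemma cycle_xyz_stab_state_phased:
  assumes "\<phi> \<in> stab_states"
  shows "cycle_xyz \<phi> \<in> phased_stab_states"
  using assms unfolding stab_states_def
  by (elim insertE emptyE)
    (simp_all only: cycle_xyz_stab_kets,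
      (rule phased_stab_statesI; simp add: stab_states_def cmod_def power2_eq_square)+)

lemma flip_x_phased_stab_states: "flip_x ` phased_stab_states = phased_stab_states"
proof -
  have sub: "flip_x ` phased_stab_states \<subseteq> phased_stab_states"
    by (rule image_phased_stab_states_subset) (simp_all add: flip_x_smult flip_x_stab_state_phased)
  then have "phased_stab_states \<subseteq> flip_x ` phased_stab_states"
    by (metis (no_types, lifting) flip_x_flip_x image_image image_ident image_mono image_cong)
  with sub show ?thesis
    by blast
qed

lemma cycle_xyz_phased_stab_states: "cycle_xyz ` phased_stab_states = phased_stab_states"
proof -
  have sub: "cycle_xyz ` phased_stab_states \<subseteq> phased_stab_states"
    by (rule image_phased_stab_states_subset) (simp_all add: cycle_xyz_smult cycle_xyz_stab_state_phased)
  have "g \<in> cycle_xyz ` phased_stab_states" if g: "g \<in> phased_stab_states" for g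
  proof -
    define \<omega> :: complex where "\<omega> = Complex (1 / sqrt 2) (- 1 / sqrt 2)"
    have "cmod (cnj \<omega>) = 1"
      by (simp add: \<omega>_def cmod_def power2_eq_square)
    then have "cycle_xyz (cycle_xyz (cnj \<omega> *s g)) \<in> phased_stab_states"
      using sub g phased_stab_states_smult by blast
    moreover have "\<omega> * cnj \<omega> = 1"
      using \<open>cmod (cnj \<omega>) = 1\<close> by (simp flip: complex_norm_square)
    then have "g = cycle_xyz (cycle_xyz (cycle_xyz (cnj \<omega> *s g)))"
      unfolding cycle_xyz_cube \<omega>_def[symmetric] by simp
    ultimately show ?thesis
      by blast
  qed
  with sub show ?thesis
    by blast
qed

lemma braket_flip_x: "braket (flip_x w) (flip_x v) = cnj (braket w v)"
  by (simp add: braket_def sum_2 flip_x_def)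

lemma braket_cycle_xyz: "braket (cycle_xyz w) (cycle_xyz v) = braket w v"
  by (simp add: braket_def sum_2 cycle_xyz_def field_simps sqrt_2_mult_sqrt_2)

lemma bloch_flip_x: "bloch (flip_x v) = (\<lambda>(t, x, y, z). (t, - x, y, z)) (bloch v)"
  by (simp add: bloch_def flip_x_def)

lemma bloch_cycle_xyz: "bloch (cycle_xyz v) = (\<lambda>(t, x, y, z). (t, z, x, y)) (bloch v)"
  by (simp add: bloch_def cycle_xyz_def cmod_mult_self power2_eq_square field_simps)

lemma witness_decomposable_flip_x:
  "witness_decomposable (x, y, z) \<Longrightarrow> witness_decomposable (- x, y, z)"
  by (rule witness_decomposable_symmetry[OF linear_flip_x _ flip_x_phased_stab_states _ bloch_flip_x])
    (auto simp: braket_flip_x linear_iff split_beta)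

lemma witness_decomposable_cycle_xyz:
  "witness_decomposable (x, y, z) \<Longrightarrow> witness_decomposable (z, x, y)"
  by (rule witness_decomposable_symmetry[OF linear_cycle_xyz _ cycle_xyz_phased_stab_states _ bloch_cycle_xyz])
    (auto simp: braket_cycle_xyz linear_iff split_beta)

lemma witness_decomposable_abs:
  assumes "witness_decomposable (\<bar>x\<bar>, \<bar>y\<bar>, \<bar>z\<bar>)"
  shows "witness_decomposable (x, y, z)"
proof -
  have flip_y: "witness_decomposable (a, - b, c)" if "witness_decomposable (a, b, c)" for a b c
    using that by (metis witness_decomposable_cycle_xyz witness_decomposable_flip_x)
  have flip_z: "witness_decomposable (a, b, - c)" if "witness_decomposable (a, b, c)" for a b c
    using that by (metis witness_decomposable_cycle_xyz witness_decomposable_flip_x)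
  show ?thesis
    using assms witness_decomposable_flip_x[of "\<bar>x\<bar>"] flip_y[of _ "\<bar>y\<bar>"] flip_z[of _ _ "\<bar>z\<bar>"]
    by (cases "0 \<le> x"; cases "0 \<le> y"; cases "0 \<le> z") auto
qed

section \<open>The face witness\<close>

definition face_witness :: "complex ^ 2" where
  "face_witness = ket 1 (Complex ((sqrt 3 - 1) / 2) ((sqrt 3 - 1) / 2))"

text \<open>\<open>face_vector X Y Z = X g\<^sub>x + Y g\<^sub>y + Z |0\<rangle>\<close>, where \<open>g\<^sub>x\<close> and \<open>g\<^sub>y\<close> are the multiples of \<open>|+\<rangle>\<close>
  and \<open>|+i\<rangle>\<close> with \<open>\<langle>face_witness|g\<rangle> = 1\<close>.\<close>
definition face_vector :: "real \<Rightarrow> real \<Rightarrow> real \<Rightarrow> complex ^ 2" where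
  "face_vector X Y Z =
     ket (Complex (X * (sqrt 3 + 1) / 4 + Y * (sqrt 3 + 1) / 4 + Z) (X * (sqrt 3 - 1) / 4 - Y * (sqrt 3 - 1) / 4))
         (Complex (X * (sqrt 3 + 1) / 4 + Y * (sqrt 3 - 1) / 4) (X * (sqrt 3 - 1) / 4 + Y * (sqrt 3 + 1) / 4))"

text \<open>On the light cone \<open>t\<^sup>2 = a\<^sup>2 + b\<^sup>2 + c\<^sup>2\<close> these weights invert the quadratic map
  \<open>bloch \<circ> face_vector\<close> up to a scalar factor.\<close>
definition face_weight :: "real \<Rightarrow> real \<Rightarrow> real \<Rightarrow> real \<Rightarrow> real" where
  "face_weight a b c t = a - (2 - sqrt 3) * (b + c - t)"

lemma omega_witness_face_witness: "omega_witness face_witness"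
  unfolding omega_witness_def stab_states_def ball_simps cmod_le_1_iff_sum_squares
  using sqrt_3_bounds
  by (intro conjI; simp add: braket_def sum_2 face_witness_def power2_eq_square field_simps sqrt_3_mult_sqrt_3)

lemma face_vector_eq:
  "face_vector X Y Z = X *\<^sub>R face_vector 1 0 0 + Y *\<^sub>R face_vector 0 1 0 + Z *\<^sub>R face_vector 0 0 1"
  unfolding face_vector_def vec_eq_iff forall_2 vector_add_component vector_scaleR_component ket_nth
  by (simp add: complex_eq_iff field_simps)

lemma face_vector_generators:
  "face_vector 1 0 0 \<in> witness_generators face_witness"
  "face_vector 0 1 0 \<in> witness_generators face_witness"
  "face_vector 0 0 1 \<in> witness_generators face_witness"
proof -
  define c\<^sub>x c\<^sub>y where "c\<^sub>x = Complex (sqrt 2 * (sqrt 3 + 1) / 4) (sqrt 2 * (sqrt 3 - 1) / 4)"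
    and "c\<^sub>y = Complex (sqrt 2 * (sqrt 3 + 1) / 4) (- sqrt 2 * (sqrt 3 - 1) / 4)"
  have "face_vector 1 0 0 = c\<^sub>x *s ket (1 / sqrt 2) (1 / sqrt 2)"
    "face_vector 0 1 0 = c\<^sub>y *s ket (1 / sqrt 2) (\<i> / sqrt 2)"
    "face_vector 0 0 1 = 1 *s ket 1 0"
    by (simp_all add: c\<^sub>x_def c\<^sub>y_def face_vector_def vec_eq_iff forall_2 complex_eq_iff field_simps)
  moreover have "cmod c\<^sub>x = 1" "cmod c\<^sub>y = 1"
    by (simp_all add: c\<^sub>x_def c\<^sub>y_def cmod_def power2_eq_square field_simps sqrt_3_mult_sqrt_3)
  ultimately have "face_vector 1 0 0 \<in> phased_stab_states" "face_vector 0 1 0 \<in> phased_stab_states"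
    "face_vector 0 0 1 \<in> phased_stab_states"
    by (simp_all only:) (rule phased_stab_statesI; simp add: stab_states_def)+
  moreover have "braket face_witness (face_vector 1 0 0) = 1" "braket face_witness (face_vector 0 1 0) = 1"
    "braket face_witness (face_vector 0 0 1) = 1"
    by (simp_all add: braket_def sum_2 face_witness_def face_vector_def complex_eq_iff field_simps
        sqrt_3_mult_sqrt_3)
  ultimately show "face_vector 1 0 0 \<in> witness_generators face_witness"
    "face_vector 0 1 0 \<in> witness_generators face_witness"
    "face_vector 0 0 1 \<in> witness_generators face_witness"
    unfolding witness_generators_def by simp_all
qed

lemma face_vector_in_witness_cone:
  assumes "0 \<le> X" "0 \<le> Y" "0 \<le> Z"
  shows "face_vector X Y Z \<in> witness_cone face_witness"
proof -
  have "face_vector 1 0 0 \<in> witness_cone face_witness" "face_vector 0 1 0 \<in> witness_cone face_witness"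
    "face_vector 0 0 1 \<in> witness_cone face_witness"
    unfolding witness_cone_def by (intro hull_inc face_vector_generators)+
  then show ?thesis
    unfolding witness_cone_def using assms
    by (subst face_vector_eq) (intro convex_cone_hull_add convex_cone_hull_mul; simp)
qed

lemma bloch_face_vector:
  "bloch (face_vector X Y Z) =
    (X\<^sup>2 + Y\<^sup>2 + Z\<^sup>2 + (1 + sqrt 3) / 2 * (X * Y + X * Z + Y * Z),
     X\<^sup>2 + (1 + sqrt 3) / 2 * (X * Y + X * Z) + (sqrt 3 - 1) / 2 * (Y * Z),
     Y\<^sup>2 + (1 + sqrt 3) / 2 * (X * Y + Y * Z) + (sqrt 3 - 1) / 2 * (X * Z),
     Z\<^sup>2 + (1 + sqrt 3) / 2 * (X * Z + Y * Z) + (sqrt 3 - 1) / 2 * (X * Y))"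
  unfolding bloch_def face_vector_def ket_nth cmod_power2
  by (simp add: power2_eq_square field_simps sqrt_3_mult_sqrt_3)

lemma bloch_face_vector_light_cone:
  assumes "t\<^sup>2 = x\<^sup>2 + y\<^sup>2 + z\<^sup>2"
  shows "bloch (face_vector (face_weight x y z t) (face_weight y x z t) (face_weight z x y t)) =
    ((3 - sqrt 3) * (face_weight x y z t + face_weight y x z t + face_weight z x y t)) *\<^sub>R (t, x, y, z)"
proof -
  have "bloch (face_vector (face_weight x y z t) (face_weight y x z t) (face_weight z x y t)) =
    ((3 - sqrt 3) * (face_weight x y z t + face_weight y x z t + face_weight z x y t)) *\<^sub>R (t, x, y, z)
    + (t\<^sup>2 - x\<^sup>2 - y\<^sup>2 - z\<^sup>2) *\<^sub>R ((15 * sqrt 3 - 27) / 2, (9 * sqrt 3 - 15) / 2, (9 * sqrt 3 - 15) / 2, (9 * sqrt 3 - 15) / 2)"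
    unfolding bloch_face_vector face_weight_def
    by (simp add: power2_eq_square field_simps sqrt_3_mult_sqrt_3)
  with assms show ?thesis
    by (simp add: zero_prod_def)
qed

lemma light_cone_crossing:
  fixes x y z a b c m :: real
  assumes "x\<^sup>2 + y\<^sup>2 + z\<^sup>2 \<le> 1" "0 < m"
  obtains s where "0 \<le> s" "s * m \<le> 1" "(1 - s * m)\<^sup>2 = (x - s * a)\<^sup>2 + (y - s * b)\<^sup>2 + (z - s * c)\<^sup>2"
proof -
  define f where "f s = (x - s * a)\<^sup>2 + (y - s * b)\<^sup>2 + (z - s * c)\<^sup>2 - (1 - s * m)\<^sup>2" for s
  have "f 0 \<le> 0"
    using assms(1) by (simp add: f_def)
  moreover have "0 \<le> f (1 / m)"
    using assms(2) by (simp add: f_def)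
  moreover have "continuous_on {0..1 / m} f"
    unfolding f_def by (intro continuous_intros)
  ultimately obtain s where "0 \<le> s" "s \<le> 1 / m" "f s = 0"
    using IVT'[of f 0 0 "1 / m"] assms(2) by auto
  then show thesis
    using assms(2) by (intro that[of s]) (auto simp: f_def field_simps)
qed

lemma light_cone_in_face_hull:
  assumes "t\<^sup>2 = x\<^sup>2 + y\<^sup>2 + z\<^sup>2"
    and "0 \<le> face_weight x y z t" "0 \<le> face_weight y x z t" "0 \<le> face_weight z x y t"
    and "0 < face_weight x y z t + face_weight y x z t + face_weight z x y t"
  shows "(t, x, y, z) \<in> convex_cone hull (bloch ` witness_cone face_witness)"
proof -
  define v where "v = face_vector (face_weight x y z t) (face_weight y x z t) (face_weight z x y t)"
  define m where "m = (3 - sqrt 3) * (face_weight x y z t + face_weight y x z t + face_weight z x y t)"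
  have "0 < m"
    using assms(5) sqrt_3_bounds by (simp add: m_def)
  have "v \<in> witness_cone face_witness"
    unfolding v_def using assms(2-4) by (rule face_vector_in_witness_cone)
  then have "inverse m *\<^sub>R bloch v \<in> convex_cone hull (bloch ` witness_cone face_witness)"
    using \<open>0 < m\<close> by (intro convex_cone_hull_mul hull_inc imageI) simp_all
  moreover have "inverse m *\<^sub>R bloch v = (t, x, y, z)"
    using \<open>0 < m\<close> unfolding v_def bloch_face_vector_light_cone[OF assms(1)] m_def[symmetric]
    by (simp only: scaleR_scaleR) simp
  ultimately show ?thesis
    by simp
qed

lemma witness_decomposable_face:
  assumes ball: "x\<^sup>2 + y\<^sup>2 + z\<^sup>2 \<le> 1" and outside: "1 < x + y + z"
    and weights: "0 \<le> face_weight x y z 1" "0 \<le> face_weight y x z 1" "0 \<le> face_weight z x y 1"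
  shows "witness_decomposable (x, y, z)"
proof -
  define K where "K = 3 - sqrt 3"
  define a b c where "a = face_weight x y z 1 / K" and "b = face_weight y x z 1 / K"
    and "c = face_weight z x y 1 / K"
  have K: "0 < K"
    using sqrt_3_bounds by (simp add: K_def)
  have abc: "0 \<le> a" "0 \<le> b" "0 \<le> c" and Kabc: "K * a = face_weight x y z 1"
    "K * b = face_weight y x z 1" "K * c = face_weight z x y 1"
    using weights K by (simp_all add: a_def b_def c_def)
  have "K * (a + b + c - 1) = (2 * sqrt 3 - 3) * (x + y + z - 1)"
    unfolding distrib_left right_diff_distrib Kabc by (simp add: K_def face_weight_def algebra_simps)
  moreover have "0 < (2 * sqrt 3 - 3) * (x + y + z - 1)"
    using sqrt_3_bounds outside by simp
  ultimately have abc_gt_1: "1 < a + b + c"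
    using K zero_less_mult_pos by (metis diff_gt_0_iff_gt)
  \<comment> \<open>Move from \<open>(1, x, y, z)\<close> to the light cone along \<open>-(a + b + c, a, b, c)\<close>; the step taken is a
    nonnegative combination of the Bloch vectors \<open>(1, 1, 0, 0)\<close>, \<open>(1, 0, 1, 0)\<close>, \<open>(1, 0, 0, 1)\<close> of the
    three generators, and along the way the face weights just scale by \<open>1 - s\<close>.\<close>
  obtain s where s: "0 \<le> s" "s * (a + b + c) \<le> 1"
    and on_cone: "(1 - s * (a + b + c))\<^sup>2 = (x - s * a)\<^sup>2 + (y - s * b)\<^sup>2 + (z - s * c)\<^sup>2"
    using light_cone_crossing[OF ball, of "a + b + c" a b c] abc_gt_1 by auto
  have "s < 1"
  proof (rule ccontr)
    assume "\<not> s < 1"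
    then have "a + b + c \<le> s * (a + b + c)"
      using abc_gt_1 by (simp add: mult_le_cancel_right1)
    then show False
      using s(2) abc_gt_1 by linarith
  qed
  define t where "t = 1 - s * (a + b + c)"
  have generators: "bloch (face_vector X Y Z) \<in> convex_cone hull (bloch ` witness_cone face_witness)"
    if "0 \<le> X" "0 \<le> Y" "0 \<le> Z" for X Y Z
    using that by (intro hull_inc imageI face_vector_in_witness_cone)
  have "face_weight (x - s * a) (y - s * b) (z - s * c) t = face_weight x y z 1 - s * (K * a)"
    "face_weight (y - s * b) (x - s * a) (z - s * c) t = face_weight y x z 1 - s * (K * b)"
    "face_weight (z - s * c) (x - s * a) (y - s * b) t = face_weight z x y 1 - s * (K * c)"
    by (simp_all add: t_def K_def face_weight_def algebra_simps)
  then have "face_weight (x - s * a) (y - s * b) (z - s * c) t = (1 - s) * (K * a)"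
    "face_weight (y - s * b) (x - s * a) (z - s * c) t = (1 - s) * (K * b)"
    "face_weight (z - s * c) (x - s * a) (y - s * b) t = (1 - s) * (K * c)"
    using Kabc by (simp_all add: algebra_simps)
  then have "(t, x - s * a, y - s * b, z - s * c) \<in> convex_cone hull (bloch ` witness_cone face_witness)"
    using on_cone \<open>s < 1\<close> K abc abc_gt_1
    by (intro light_cone_in_face_hull) (simp_all add: t_def flip: distrib_left)
  moreover have "(1, 1, 0, 0) \<in> convex_cone hull (bloch ` witness_cone face_witness)"
    "(1, 0, 1, 0) \<in> convex_cone hull (bloch ` witness_cone face_witness)"
    "(1, 0, 0, 1) \<in> convex_cone hull (bloch ` witness_cone face_witness)"
    using generators[of 1 0 0] generators[of 0 1 0] generators[of 0 0 1] by (simp_all add: bloch_face_vector)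
  ultimately have "(t, x - s * a, y - s * b, z - s * c) + (s * a) *\<^sub>R (1, 1, 0, 0) + (s * b) *\<^sub>R (1, 0, 1, 0)
      + (s * c) *\<^sub>R (1, 0, 0, 1) \<in> convex_cone hull (bloch ` witness_cone face_witness)"
    using s abc by (intro convex_cone_hull_add convex_cone_hull_mul) simp_all
  then have "(1, x, y, z) \<in> convex_cone hull (bloch ` witness_cone face_witness)"
    by (simp add: t_def algebra_simps)
  then show ?thesis
    using omega_witness_face_witness unfolding witness_decomposable_def by blast
qed

section \<open>The edge witness\<close>

definition edge_witness :: "real \<Rightarrow> real \<Rightarrow> complex ^ 2" where
  "edge_witness c s = ket 1 (Complex (sqrt 2 * c - 1) (sqrt 2 * s))"

text \<open>\<open>edge_vector (cos \<theta>) (sin \<theta>) a b = a|0\<rangle> + b e\<^sup>i\<^sup>\<theta>|+\<rangle>\<close>.\<close>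
definition edge_vector :: "real \<Rightarrow> real \<Rightarrow> real \<Rightarrow> real \<Rightarrow> complex ^ 2" where
  "edge_vector c s a b =
     ket (Complex (a + b * c / sqrt 2) (b * s / sqrt 2)) (Complex (b * c / sqrt 2) (b * s / sqrt 2))"

lemma omega_witness_edge_witness:
  assumes "c\<^sup>2 + s\<^sup>2 = 1" "1 \<le> sqrt 2 * (c - s)" "1 \<le> sqrt 2 * (c + s)"
  shows "omega_witness (edge_witness c s)"
  unfolding omega_witness_def stab_states_def ball_simps cmod_le_1_iff_sum_squares
  using assms
  by (intro conjI; simp add: braket_def sum_2 edge_witness_def power2_eq_square field_simps sqrt_2_mult_sqrt_2)

lemma edge_vector_in_witness_cone:
  assumes "c\<^sup>2 + s\<^sup>2 = 1" "0 \<le> a" "0 \<le> b"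
  shows "edge_vector c s a b \<in> witness_cone (edge_witness c s)"
proof -
  have "edge_vector c s 1 0 = 1 *s ket 1 0"
    "edge_vector c s 0 1 = Complex c s *s ket (1 / sqrt 2) (1 / sqrt 2)"
    by (simp_all add: edge_vector_def vec_eq_iff forall_2 complex_eq_iff)
  moreover have "cmod (Complex c s) = 1"
    using assms(1) by (simp add: cmod_def)
  ultimately have "edge_vector c s 1 0 \<in> phased_stab_states" "edge_vector c s 0 1 \<in> phased_stab_states"
    by (simp_all only:) (rule phased_stab_statesI; simp add: stab_states_def)+
  moreover have "braket (edge_witness c s) (edge_vector c s 1 0) = 1"
    "braket (edge_witness c s) (edge_vector c s 0 1) = 1"
    using arg_cong[OF assms(1), of "\<lambda>r. r * sqrt 2"]
    by (simp_all add: braket_def sum_2 edge_witness_def edge_vector_def complex_eq_iff power2_eq_square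
        field_simps sqrt_2_mult_sqrt_2)
  ultimately have "edge_vector c s 1 0 \<in> witness_cone (edge_witness c s)"
    "edge_vector c s 0 1 \<in> witness_cone (edge_witness c s)"
    unfolding witness_cone_def witness_generators_def by (auto intro: hull_inc)
  moreover have "edge_vector c s a b = a *\<^sub>R edge_vector c s 1 0 + b *\<^sub>R edge_vector c s 0 1"
    unfolding edge_vector_def vec_eq_iff forall_2 vector_add_component vector_scaleR_component ket_nth
    by (simp add: complex_eq_iff)
  ultimately show ?thesis
    using assms(2,3) unfolding witness_cone_def by (simp add: convex_cone_hull_add convex_cone_hull_mul)
qed

lemma bloch_edge_vector:
  assumes "c\<^sup>2 + s\<^sup>2 = 1"
  shows "bloch (edge_vector c s a b) =
    (a\<^sup>2 + sqrt 2 * a * b * c + b\<^sup>2, sqrt 2 * a * b * c + b\<^sup>2, sqrt 2 * a * b * s, a\<^sup>2 + sqrt 2 * a * b * c)"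
proof -
  have "b\<^sup>2 * c\<^sup>2 + b\<^sup>2 * s\<^sup>2 = b\<^sup>2"
    using assms by (metis distrib_left mult.right_neutral)
  then show ?thesis
    unfolding bloch_def edge_vector_def ket_nth cmod_power2
    by (simp add: power2_eq_square field_simps sqrt_2_mult_sqrt_2)
qed

lemma edge_angle_bound:
  fixes X y :: real
  assumes "(2 + sqrt 3) * \<bar>y\<bar> \<le> X"
  shows "sqrt (X\<^sup>2 + y\<^sup>2) \<le> sqrt 2 * (X - \<bar>y\<bar>)"
proof (rule real_le_lsqrt)
  have "(2 - sqrt 3) * \<bar>y\<bar> \<le> (2 + sqrt 3) * \<bar>y\<bar>" "1 * \<bar>y\<bar> \<le> (2 + sqrt 3) * \<bar>y\<bar>"
    using sqrt_3_bounds by (intro mult_right_mono; simp)+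
  then have "0 \<le> (X - (2 + sqrt 3) * \<bar>y\<bar>) * (X - (2 - sqrt 3) * \<bar>y\<bar>)" and X: "\<bar>y\<bar> \<le> X"
    using assms by (simp_all add: mult_nonneg_nonneg)
  then show "X\<^sup>2 + y\<^sup>2 \<le> (sqrt 2 * (X - \<bar>y\<bar>))\<^sup>2"
    by (simp add: power_mult_distrib power2_eq_square algebra_simps sqrt_3_mult_sqrt_3)
  show "0 \<le> sqrt 2 * (X - \<bar>y\<bar>)"
    using X by simp
qed

lemma omega_witness_edge_direction:
  assumes "0 < X" "(2 + sqrt 3) * \<bar>y\<bar> \<le> X"
  defines "N \<equiv> sqrt (X\<^sup>2 + y\<^sup>2)"
  shows "(X / N)\<^sup>2 + (y / N)\<^sup>2 = 1" "omega_witness (edge_witness (X / N) (y / N))"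
proof -
  have N: "0 < N" "N\<^sup>2 = X\<^sup>2 + y\<^sup>2"
    using assms(1) by (simp_all add: N_def add_pos_nonneg)
  then show cs: "(X / N)\<^sup>2 + (y / N)\<^sup>2 = 1"
    using assms(1) by (simp add: power_divide add_divide_distrib[symmetric])
  have "N \<le> sqrt 2 * (X - \<bar>y\<bar>)"
    unfolding N_def using assms(2) by (rule edge_angle_bound)
  moreover have "sqrt 2 * (X / N - \<bar>y / N\<bar>) = sqrt 2 * (X - \<bar>y\<bar>) / N"
    using N by (simp flip: diff_divide_distrib)
  ultimately have "1 \<le> sqrt 2 * (X / N - \<bar>y / N\<bar>)"
    using N by simp
  moreover have "sqrt 2 * (X / N - \<bar>y / N\<bar>) \<le> sqrt 2 * (X / N - y / N)"
    "sqrt 2 * (X / N - \<bar>y / N\<bar>) \<le> sqrt 2 * (X / N + y / N)"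
    using abs_ge_self[of "y / N"] abs_ge_minus_self[of "y / N"]
    by (auto intro!: mult_left_mono simp del: abs_divide)
  ultimately show "omega_witness (edge_witness (X / N) (y / N))"
    using cs by (intro omega_witness_edge_witness) linarith+
qed

lemma witness_decomposable_edge:
  assumes ball: "x\<^sup>2 + y\<^sup>2 + z\<^sup>2 \<le> 1" and X: "0 < x + z - 1"
    and y: "(2 + sqrt 3) * \<bar>y\<bar> \<le> x + z - 1"
  shows "witness_decomposable (x, y, z)"
proof -
  define X where "X = x + z - 1"
  define N where "N = sqrt (X\<^sup>2 + y\<^sup>2)"
  define c s where "c = X / N" and "s = y / N"
  have cs: "c\<^sup>2 + s\<^sup>2 = 1" and witness: "omega_witness (edge_witness c s)"
    using omega_witness_edge_direction[of X y] X y unfolding c_def s_def N_def X_def by simp_all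
  have N: "0 < N" "N\<^sup>2 = X\<^sup>2 + y\<^sup>2"
    using X by (simp_all add: N_def X_def add_pos_nonneg)
  have "z < 1"
  proof -
    have "z\<^sup>2 \<le> 1"
      using ball zero_le_power2[of x] zero_le_power2[of y] by linarith
    then have "z \<le> 1"
      by (simp add: abs_square_le_1)
    moreover have "z \<noteq> 1"
    proof
      assume "z = 1"
      then have "x\<^sup>2 + y\<^sup>2 \<le> 0"
        using ball by simp
      then have "x\<^sup>2 \<le> 0"
        using zero_le_power2[of y] by linarith
      then have "x = 0"
        by simp
      then show False
        using X \<open>z = 1\<close> by simp
    qed
    ultimately show ?thesis
      by simp
  qed
  \<comment> \<open>With \<open>\<beta>\<^sup>2 = 1 - z\<close> and \<open>\<surd>2 \<alpha> \<beta> = N\<close>, the edge vector \<open>\<alpha>|0\<rangle> + \<beta> e\<^sup>i\<^sup>\<theta>|+\<rangle>\<close> has Bloch vector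
    \<open>(\<alpha>\<^sup>2 + X + \<beta>\<^sup>2, x, y, \<alpha>\<^sup>2 + X)\<close>; the remainder is \<open>\<gamma>\<^sup>2 (1, 0, 0, 1)\<close>, the Bloch vector of \<open>\<gamma>|0\<rangle>\<close>.\<close>
  define \<beta> where "\<beta> = sqrt (1 - z)"
  define \<alpha> where "\<alpha> = N / (sqrt 2 * \<beta>)"
  define \<gamma> where "\<gamma> = sqrt (1 - x - \<alpha>\<^sup>2)"
  have \<beta>: "0 < \<beta>" "\<beta>\<^sup>2 = 1 - z"
    using \<open>z < 1\<close> by (simp_all add: \<beta>_def)
  have \<alpha>\<beta>: "sqrt 2 * \<alpha> * \<beta> = N" "\<alpha>\<^sup>2 = (X\<^sup>2 + y\<^sup>2) / (2 * (1 - z))"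
    using \<beta> N by (simp_all add: \<alpha>_def power_divide power_mult_distrib)
  have "2 * (1 - x) * (1 - z) - (X\<^sup>2 + y\<^sup>2) = 1 - x\<^sup>2 - y\<^sup>2 - z\<^sup>2"
    by (simp add: X_def power2_eq_square algebra_simps)
  then have "X\<^sup>2 + y\<^sup>2 \<le> (1 - x) * (2 * (1 - z))"
    using ball by (simp only: mult.assoc mult.left_commute[of 2])
  then have "\<alpha>\<^sup>2 \<le> 1 - x"
    using \<open>z < 1\<close> unfolding \<alpha>\<beta>(2) by (simp add: pos_divide_le_eq)
  then have \<gamma>: "\<gamma>\<^sup>2 = 1 - x - \<alpha>\<^sup>2" "0 \<le> \<gamma>"
    by (simp_all add: \<gamma>_def)
  have "0 \<le> \<alpha>"
    using N \<beta> by (simp add: \<alpha>_def)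
  have "bloch (edge_vector c s \<alpha> \<beta>) \<in> convex_cone hull (bloch ` witness_cone (edge_witness c s))"
    "bloch (edge_vector c s \<gamma> 0) \<in> convex_cone hull (bloch ` witness_cone (edge_witness c s))"
    using cs \<open>0 \<le> \<alpha>\<close> \<beta> \<gamma> by (intro hull_inc imageI edge_vector_in_witness_cone; simp)+
  then have "bloch (edge_vector c s \<alpha> \<beta>) + bloch (edge_vector c s \<gamma> 0)
      \<in> convex_cone hull (bloch ` witness_cone (edge_witness c s))"
    by (rule convex_cone_hull_add)
  moreover have "sqrt 2 * \<alpha> * \<beta> * c = X" "sqrt 2 * \<alpha> * \<beta> * s = y"
    using N unfolding \<alpha>\<beta>(1) by (simp_all add: c_def s_def)
  then have "bloch (edge_vector c s \<alpha> \<beta>) + bloch (edge_vector c s \<gamma> 0) = (1, x, y, z)"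
    unfolding bloch_edge_vector[OF cs] using \<beta>(2) \<gamma>(1) by (simp add: X_def algebra_simps)
  ultimately show ?thesis
    using witness unfolding witness_decomposable_def by auto
qed

section \<open>Non-stabilizer states\<close>

lemma face_weight_negative_imp_edge:
  assumes "0 \<le> c" "face_weight c a b 1 < 0"
  shows "0 < a + b - 1" "(2 + sqrt 3) * \<bar>c\<bar> \<le> a + b - 1"
proof -
  have c: "c < (2 - sqrt 3) * (a + b - 1)"
    using assms(2) by (simp add: face_weight_def)
  then have "0 < (2 - sqrt 3) * (a + b - 1)"
    using assms(1) by linarith
  moreover have "0 < 2 - sqrt 3"
    using sqrt_3_bounds by simp
  ultimately show "0 < a + b - 1"
    by (simp add: zero_less_mult_iff)
  have "(2 + sqrt 3) * c \<le> (2 + sqrt 3) * ((2 - sqrt 3) * (a + b - 1))"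
    using c by (intro mult_left_mono) simp_all
  also have "\<dots> = a + b - 1"
    by (simp add: algebra_simps sqrt_3_mult_sqrt_3)
  finally show "(2 + sqrt 3) * \<bar>c\<bar> \<le> a + b - 1"
    using assms(1) by simp
qed

text \<open>If some face weight of the point is negative, the point lies close to an edge of the
  octahedron.\<close>
lemma witness_decomposable_positive_octant:
  assumes "0 \<le> x" "0 \<le> y" "0 \<le> z" and ball: "x\<^sup>2 + y\<^sup>2 + z\<^sup>2 \<le> 1" and outside: "1 < x + y + z"
  shows "witness_decomposable (x, y, z)"
proof (cases "face_weight y x z 1 < 0")
  case True
  show ?thesis
    using face_weight_negative_imp_edge[OF assms(2) True] by (rule witness_decomposable_edge[OF ball])
next
  case y: False
  show ?thesis
  proof (cases "face_weight z x y 1 < 0")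
    case True
    have "witness_decomposable (y, z, x)"
    proof (rule witness_decomposable_edge)
      show "y\<^sup>2 + z\<^sup>2 + x\<^sup>2 \<le> 1"
        using ball by simp
      show "0 < y + x - 1" "(2 + sqrt 3) * \<bar>z\<bar> \<le> y + x - 1"
        using face_weight_negative_imp_edge[OF assms(3) True] by (simp_all add: add.commute)
    qed
    then show ?thesis
      by (rule witness_decomposable_cycle_xyz)
  next
    case z: False
    show ?thesis
    proof (cases "face_weight x y z 1 < 0")
      case True
      have "witness_decomposable (z, x, y)"
      proof (rule witness_decomposable_edge)
        show "z\<^sup>2 + x\<^sup>2 + y\<^sup>2 \<le> 1"
          using ball by simp
        show "0 < z + y - 1" "(2 + sqrt 3) * \<bar>x\<bar> \<le> z + y - 1"
          using face_weight_negative_imp_edge[OF assms(1) True] by (simp_all add: add.commute)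
      qed
      then have "witness_decomposable (y, z, x)"
        by (rule witness_decomposable_cycle_xyz)
      then show ?thesis
        by (rule witness_decomposable_cycle_xyz)
    next
      case False
      with y z show ?thesis
        by (intro witness_decomposable_face[OF ball outside]) simp_all
    qed
  qed
qed

lemma witness_decomposable_outside_octahedron:
  assumes "x\<^sup>2 + y\<^sup>2 + z\<^sup>2 \<le> 1" "1 < \<bar>x\<bar> + \<bar>y\<bar> + \<bar>z\<bar>"
  shows "witness_decomposable (x, y, z)"
  using assms by (intro witness_decomposable_positive_octant [THEN witness_decomposable_abs]) simp_all

theorem lemma4:
  fixes \<rho> :: "complex ^ 2 ^ 2"
  assumes "density_matrix \<rho>" and "non_stabilizer \<rho>"
  shows "\<exists>w. omega_witness w \<and> \<rho> \<in> B_omega w"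
proof -
  define x y z where "x = 2 * Re (\<rho> $ 2 $ 1)" and "y = 2 * Im (\<rho> $ 2 $ 1)"
    and "z = Re (\<rho> $ 1 $ 1) - Re (\<rho> $ 2 $ 2)"
  have \<rho>: "\<rho> = bloch_matrix (1, x, y, z)"
    unfolding x_def y_def z_def by (rule density_matrix_eq_bloch_matrix[OF assms(1)])
  have "x\<^sup>2 + y\<^sup>2 + z\<^sup>2 \<le> 1"
    using assms(1) unfolding \<rho> by (rule density_matrix_bloch_ball)
  moreover have "1 < \<bar>x\<bar> + \<bar>y\<bar> + \<bar>z\<bar>"
    using assms(2) bloch_matrix_in_stab_hull unfolding non_stabilizer_def \<rho> by force
  ultimately obtain w where "omega_witness w" "(1, x, y, z) \<in> convex_cone hull (bloch ` witness_cone w)"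
    using witness_decomposable_outside_octahedron unfolding witness_decomposable_def by blast
  then show ?thesis
    unfolding \<rho> by (blast intro: bloch_matrix_in_B_omega)
qed

end
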